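(* Let $d\ge2$. Let $C\subseteq\mathbb Z^d$ be a cube and let $\mathcal C$ be a collection of cubes such that $\mathrm{nbhd}(C')\subseteq C$ for every $C'\in\mathcal C$ and $\mathrm{nbhd}(C')\cap\mathrm{nbhd}(C'')=\emptyset$ for all distinct $C',C''\in\mathcal C$. Put $$E=\mathrm{edges}^+(C)\setminus\bigcup\{\mathrm{edges}(\mathrm{nbhd}(C')):C'\in\mathcal C\}.$$ Let $f:\mathbb Z^d\to\mathbb Z$ and let $\varphi:G\to\mathbb R$ be a bounded $f$-flow on the Cayley graph $G$ of $\mathbb Z^d$. Then there exists an $f$-flow $\psi:G\to\mathbb R$ such that: (i) $\mathrm{supp}(\varphi-\psi)\subseteq\mathrm{edges}(\mathrm{nbhd}(C))$; (ii) for every $C'\in\mathcal C$, $(\varphi-\psi)(x,y)=0$ whenever $(x,y)\in\mathrm{edges}^+(C')$ or $(y,x)\in\mathrm{edges}^+(C')$; (iii) $\psi(e)\in\mathbb Z$ for every edge $e\in E$; (iv) $|\varphi-\psi|<6d$ on every edge.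
   Context: $G=\{(x,x')\in\mathbb Z^d\times\mathbb Z^d: x'-x\in\{\pm e_1,\dots,\pm e_d\}\}$ is the Cayley graph of $\mathbb Z^d$; an edge $(x,x')$ is positively oriented if $x'-x=e_j$ for some $j$. For $A\subseteq\mathbb Z^d$: $\mathrm{edges}(A)=\{(x,x+e_j):1\le j\le d,\ \{x,x+e_j\}\subseteq A\}$; $\mathrm{edges}^+(A)=\{(x,x+e_j):1\le j\le d,\ \{x,x+e_j\}\cap A\ne\emptyset\}$; $\mathrm{nbhd}(A)=\{x+y:x\in A,\ y\in\{-1,0,1\}^d\}$. A cube is a set of the form $\{n_1,\dots,n_1+k_1\}\times\dots\times\{n_d,\dots,n_d+k_d\}$ with $n_i\in\mathbb Z$, $k_i\ge0$. An $f$-flow is $\varphi:G\to\mathbb R$ with $\varphi(x,y)=-\varphi(y,x)$ and $f(x)=\sum_{(x,y)\in G}\varphi(x,y)$ for all $x$. For antisymmetric $\eta$, "$\mathrm{supp}(\eta)\subseteq\mathcal E$" for a set $\mathcal E$ of positively oriented edges means $\eta(x,y)=0$ unless $(x,y)\in\mathcal E$ or $(y,x)\in\mathcal E$. *)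

theory Defs
  imports "HOL-Analysis.Analysis"
begin

text \<open>Points of Z^d are vectors of type int^'n, with d = CARD('n).
  The unit vector e_j is axis j 1.\<close>

definition cayley :: "((int^'n) \<times> (int^'n)) set" where
  "cayley = {(x, x'). \<exists>j. x' - x = axis j 1 \<or> x' - x = - axis j 1}"

definition edges :: "(int^'n) set \<Rightarrow> ((int^'n) \<times> (int^'n)) set" where
  "edges A = {(x, x + axis j 1) | x j. x \<in> A \<and> x + axis j 1 \<in> A}"

definition edges_plus :: "(int^'n) set \<Rightarrow> ((int^'n) \<times> (int^'n)) set" where
  "edges_plus A = {(x, x + axis j 1) | x j. x \<in> A \<or> x + axis j 1 \<in> A}"

definition nbhd :: "(int^'n) set \<Rightarrow> (int^'n) set" where
  "nbhd A = {x + y | x y. x \<in> A \<and> (\<forall>i. y $ i \<in> {-1, 0, 1})}"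

definition is_cube :: "(int^'n) set \<Rightarrow> bool" where
  "is_cube C \<longleftrightarrow> (\<exists>n k. (\<forall>i. k $ i \<ge> 0) \<and>
      C = {x. \<forall>i. n $ i \<le> x $ i \<and> x $ i \<le> n $ i + k $ i})"

text \<open>An f-flow: antisymmetric on the Cayley graph with divergence f.
  Only values on edges of the Cayley graph matter.\<close>
definition is_flow :: "(int^'n \<Rightarrow> int) \<Rightarrow> ((int^'n) \<times> (int^'n) \<Rightarrow> real) \<Rightarrow> bool" where
  "is_flow f \<phi> \<longleftrightarrow>
     (\<forall>x y. (x, y) \<in> cayley \<longrightarrow> \<phi> (x, y) = - \<phi> (y, x)) \<and>
     (\<forall>x. real_of_int (f x) = (\<Sum>y\<in>{y. (x, y) \<in> cayley}. \<phi> (x, y)))"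

definition supp_in :: "((int^'n) \<times> (int^'n) \<Rightarrow> real) \<Rightarrow> ((int^'n) \<times> (int^'n)) set \<Rightarrow> bool" where
  "supp_in \<eta> E \<longleftrightarrow> (\<forall>x y. (x, y) \<in> cayley \<longrightarrow> \<eta> (x, y) \<noteq> 0 \<longrightarrow> (x, y) \<in> E \<or> (y, x) \<in> E)"

end

theory Submission
  imports Defs
begin

text \<open>The correction is the boundary of a 2-chain. Fix directions q \<noteq> m and put a weight
  in [0, 1) on every unit square spanned by e_q and some other e_j; the boundary of such a chain
  is divergence free, so adding it to \<phi> keeps an f-flow. The weights are chosen recursively in
  the order of the coordinate sum of the corner: the square at z in direction j \<noteq> q makes the
  edge (z, z + e_j) integral whenever it touches C, and the square at z in direction m makes the
  edge (z, z + e_q) entering C integral. The other edges of C in direction q are then integral by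
  induction along e_q, since the divergence f is integral. Finally every square meeting a member
  of CC gets weight 0: this kills the correction on the edges touching a member and does not
  change it on edges not inside the neighbourhood of a single member. An edge borders at most
  2(d - 1) squares, whence the bound 2d < 6d.\<close>

lemma axis_one_nth: "axis k (1::int) $ i = (if i = k then 1 else 0)"
  by (simp add: axis_def)

lemma add_axis_eq_add_axis_iff: "(x::int^'n) + axis k 1 = x + axis i 1 \<longleftrightarrow> i = k"
  by (auto simp: axis_eq_axis)

lemma add_two_axes_neq: "(x::int^'n) \<noteq> x + axis k 1 + axis i 1"
proof
  assume "x = x + axis k 1 + axis i 1"
  hence "x $ k = x $ k + 1 + axis i 1 $ k"
    by (metis axis_nth vector_add_component)
  thus False by (simp add: axis_one_nth split: if_splits)
qed

lemma cayley_cases: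
  assumes "(x, y) \<in> cayley"
  obtains k where "y = x + axis k 1" | k where "x = y + axis k 1"
proof -
  from assms obtain j where "y - x = axis j 1 \<or> y - x = - axis j 1"
    by (auto simp: cayley_def)
  thus ?thesis using that by (metis add_diff_cancel_left' diff_add_cancel minus_diff_eq)
qed

lemma sum_cayley_neighbours:
  "(\<Sum>y\<in>{y. (x, y) \<in> (cayley :: ((int^'n) \<times> (int^'n)) set)}. h y)
     = (\<Sum>k\<in>UNIV. h (x + axis k 1)) + (\<Sum>k\<in>UNIV. h (x - axis k 1))"
proof -
  have nbrs: "{y. (x, y) \<in> (cayley :: ((int^'n) \<times> (int^'n)) set)}
      = range (\<lambda>k. x + axis k 1) \<union> range (\<lambda>k. x - axis k 1)"
    unfolding cayley_def by (auto simp: algebra_simps)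
  have disjoint: "range (\<lambda>k. x + axis k 1) \<inter> range (\<lambda>k. x - axis k (1::int)) = {}"
  proof safe
    fix i k assume "x + axis i 1 = x - axis k 1"
    hence "(x + axis i 1) $ i = (x - axis k 1) $ i" by simp
    thus "x + axis i 1 \<in> {}" by (simp add: axis_one_nth split: if_splits)
  qed
  have "inj (\<lambda>k. x + axis k (1::int))" "inj (\<lambda>k. x - axis k (1::int))"
    by (auto simp: inj_def axis_eq_axis)
  thus ?thesis unfolding nbrs
    by (subst sum.union_disjoint) (use disjoint in \<open>auto simp: sum.reindex\<close>)
qed

lemma sum_cayley_neighbours_antisym:
  fixes \<phi> :: "(int^'n) \<times> (int^'n) \<Rightarrow> real"
  assumes "\<And>k. \<phi> (x, x - axis k 1) = - \<phi> (x - axis k 1, x)"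
  shows "(\<Sum>y\<in>{y. (x, y) \<in> cayley}. \<phi> (x, y))
     = (\<Sum>k\<in>UNIV. \<phi> (x, x + axis k 1)) - (\<Sum>k\<in>UNIV. \<phi> (x - axis k 1, x))"
  using sum_cayley_neighbours[where h = "\<lambda>y. \<phi> (x, y)"] by (simp add: assms sum_negf)

lemma is_flow_divergence:
  assumes "is_flow f \<phi>"
  shows "real_of_int (f x) = (\<Sum>k\<in>UNIV. \<phi> (x, x + axis k 1)) - (\<Sum>k\<in>UNIV. \<phi> (x - axis k 1, x))"
proof -
  have "(x, x - axis k 1) \<in> cayley" for k by (auto simp: cayley_def)
  with assms have "\<phi> (x, x - axis k 1) = - \<phi> (x - axis k 1, x)" for k
    unfolding is_flow_def by blast
  moreover have "real_of_int (f x) = (\<Sum>y\<in>{y. (x, y) \<in> cayley}. \<phi> (x, y))"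
    using assms unfolding is_flow_def by blast
  ultimately show ?thesis by (simp add: sum_cayley_neighbours_antisym)
qed

definition edge_flow :: "(int^'n \<Rightarrow> 'n \<Rightarrow> real) \<Rightarrow> (int^'n) \<times> (int^'n) \<Rightarrow> real" where
  "edge_flow P e = (\<Sum>k\<in>UNIV. (if snd e = fst e + axis k 1 then P (fst e) k else 0)
      - (if fst e = snd e + axis k 1 then P (snd e) k else 0))"

lemma edge_flow_pos [simp]: "edge_flow P (x, x + axis k 1) = P x k"
proof -
  have "edge_flow P (x, x + axis k 1) = (\<Sum>i\<in>UNIV. if i = k then P x k else 0)"
    unfolding edge_flow_def using add_two_axes_neq[of x k]
    by (intro sum.cong) (auto simp: add_axis_eq_add_axis_iff axis_eq_axis)
  thus ?thesis by simp
qed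

lemma edge_flow_neg [simp]: "edge_flow P (x + axis k 1, x) = - P x k"
proof -
  have "edge_flow P (x + axis k 1, x) = (\<Sum>i\<in>UNIV. - (if i = k then P x k else 0))"
    unfolding edge_flow_def using add_two_axes_neq[of x k]
    by (intro sum.cong) (auto simp: add_axis_eq_add_axis_iff axis_eq_axis)
  thus ?thesis by (simp add: sum_negf)
qed

lemma edge_flow_antisym: "edge_flow P (x, y) = - edge_flow P (y, x)"
  unfolding edge_flow_def fst_conv snd_conv by (simp add: sum_subtractf)

lemma divergence_edge_flow:
  "(\<Sum>y\<in>{y. (x, y) \<in> cayley}. edge_flow P (x, y))
     = (\<Sum>k\<in>UNIV. P x k) - (\<Sum>k\<in>UNIV. P (x - axis k 1) k)"
proof -
  have "(\<Sum>y\<in>{y. (x, y) \<in> cayley}. edge_flow P (x, y))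
      = (\<Sum>k\<in>UNIV. edge_flow P (x, x + axis k 1)) - (\<Sum>k\<in>UNIV. edge_flow P (x - axis k 1, x))"
    by (rule sum_cayley_neighbours_antisym) (rule edge_flow_antisym)
  moreover have "edge_flow P (x - axis k 1, x) = P (x - axis k 1) k" for k
    using edge_flow_pos[of P "x - axis k 1" k] by simp
  ultimately show ?thesis by simp
qed

lemma is_flow_add_edge_flow:
  fixes P :: "int^'n \<Rightarrow> 'n \<Rightarrow> real"
  assumes "is_flow f \<phi>" and "\<And>x. (\<Sum>k\<in>UNIV. P x k) = (\<Sum>k\<in>UNIV. P (x - axis k 1) k)"
  shows "is_flow f (\<lambda>e. \<phi> e + edge_flow P e)"
  unfolding is_flow_def
proof (intro conjI allI impI)
  fix x y :: "int^'n" assume "(x, y) \<in> cayley"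
  with assms(1) show "\<phi> (x, y) + edge_flow P (x, y) = - (\<phi> (y, x) + edge_flow P (y, x))"
    unfolding is_flow_def using edge_flow_antisym[of P x y] by simp
next
  fix x :: "int^'n"
  show "real_of_int (f x) = (\<Sum>y\<in>{y. (x, y) \<in> cayley}. \<phi> (x, y) + edge_flow P (x, y))"
    using assms unfolding is_flow_def
    by (simp only: sum.distrib divergence_edge_flow)
qed

lemma supp_in_edge_flow:
  assumes "\<And>w l. P w l \<noteq> 0 \<Longrightarrow> (w, w + axis l 1) \<in> E"
  shows "supp_in (edge_flow P) E"
  unfolding supp_in_def
proof (intro allI impI)
  fix x y assume "(x, y) \<in> cayley" and "edge_flow P (x, y) \<noteq> 0"
  thus "(x, y) \<in> E \<or> (y, x) \<in> E"
    by (cases rule: cayley_cases) (auto intro: assms)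
qed

definition lattice_box :: "int^'n \<Rightarrow> int^'n \<Rightarrow> (int^'n) set" where
  "lattice_box lo hi = {x. \<forall>i. lo $ i \<le> x $ i \<and> x $ i \<le> hi $ i}"

lemma is_cube_lattice_box:
  assumes "is_cube C"
  obtains lo hi where "\<forall>i. lo $ i \<le> hi $ i" and "C = lattice_box lo hi"
proof -
  from assms obtain n k where "\<forall>i. k $ i \<ge> 0" "C = {x. \<forall>i. n $ i \<le> x $ i \<and> x $ i \<le> n $ i + k $ i}"
    unfolding is_cube_def by blast
  thus ?thesis using that[of n "n + k"] by (simp add: lattice_box_def)
qed

lemma lattice_box_below:
  assumes "x \<in> lattice_box lo hi \<or> x + axis j 1 \<in> lattice_box lo hi"
  shows "x \<in> lattice_box (lo - 1) hi"
  unfolding lattice_box_def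
proof (intro CollectI allI)
  fix i
  from assms have "lo $ i \<le> x $ i \<and> x $ i \<le> hi $ i
      \<or> lo $ i \<le> x $ i + axis j 1 $ i \<and> x $ i + axis j 1 $ i \<le> hi $ i"
    unfolding lattice_box_def by auto
  thus "(lo - 1) $ i \<le> x $ i \<and> x $ i \<le> hi $ i"
    by (auto simp: axis_one_nth split: if_splits)
qed

lemma lattice_box_corner:
  assumes "x + axis j 1 \<in> lattice_box lo hi" "x + axis q 1 \<in> lattice_box lo hi" "j \<noteq> q"
  shows "x \<in> lattice_box lo hi"
  unfolding lattice_box_def
proof (intro CollectI allI)
  fix i
  have "lo $ i \<le> (x + axis j 1) $ i \<and> (x + axis j 1) $ i \<le> hi $ i"
       "lo $ i \<le> (x + axis q 1) $ i \<and> (x + axis q 1) $ i \<le> hi $ i"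
    using assms unfolding lattice_box_def by auto
  thus "lo $ i \<le> x $ i \<and> x $ i \<le> hi $ i"
    using assms(3) by (cases "i = j") (auto simp: axis_one_nth)
qed

lemma unit_box_nbhd:
  assumes "u \<in> lattice_box z (z + 1)" "v \<in> lattice_box z (z + 1)" "v \<in> A"
  shows "u \<in> nbhd A"
proof -
  have "(u - v) $ i \<in> {-1, 0, 1}" for i
  proof -
    have "z $ i \<le> u $ i" "u $ i \<le> z $ i + 1" "z $ i \<le> v $ i" "v $ i \<le> z $ i + 1"
      using assms(1,2) unfolding lattice_box_def by auto
    thus ?thesis by simp presburger
  qed
  hence "u = v + (u - v) \<and> (\<forall>i. (u - v) $ i \<in> {-1, 0, 1})" by simp
  thus ?thesis unfolding nbhd_def using assms(3) by blast
qed

lemma lattice_box_subset_nbhd: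
  assumes "\<forall>i. lo $ i \<le> hi $ i"
  shows "lattice_box (lo - 1) (hi + 1) \<subseteq> nbhd (lattice_box lo hi)"
proof
  fix u assume u: "u \<in> lattice_box (lo - 1) (hi + 1)"
  define v where "v = (\<chi> i. max (lo $ i) (min (hi $ i) (u $ i)))"
  have "v \<in> lattice_box lo hi" using assms by (auto simp: lattice_box_def v_def)
  moreover have "(u - v) $ i \<in> {-1, 0, 1}" for i
  proof -
    have "lo $ i - 1 \<le> u $ i" "u $ i \<le> hi $ i + 1" "lo $ i \<le> hi $ i"
      using u assms unfolding lattice_box_def by auto
    thus ?thesis unfolding v_def by simp presburger
  qed
  ultimately have "v \<in> lattice_box lo hi \<and> u = v + (u - v) \<and> (\<forall>i. (u - v) $ i \<in> {-1, 0, 1})"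
    by simp
  thus "u \<in> nbhd (lattice_box lo hi)" unfolding nbhd_def by blast
qed

lemma unit_box_subset:
  assumes "z \<in> lattice_box (lo - 1) hi"
  shows "lattice_box z (z + 1) \<subseteq> lattice_box (lo - 1) (hi + 1)"
proof
  fix x assume x: "x \<in> lattice_box z (z + 1)"
  show "x \<in> lattice_box (lo - 1) (hi + 1)"
    unfolding lattice_box_def
  proof (intro CollectI allI)
    fix i
    have "lo $ i - 1 \<le> z $ i" "z $ i \<le> hi $ i" "z $ i \<le> x $ i" "x $ i \<le> z $ i + 1"
      using assms x unfolding lattice_box_def by auto
    thus "(lo - 1) $ i \<le> x $ i \<and> x $ i \<le> (hi + 1) $ i" by simp
  qed
qed

lemma unit_box_axis:
  "w \<in> lattice_box w (w + 1)" "w + axis k 1 \<in> lattice_box w (w + 1)"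
  "k \<noteq> q \<Longrightarrow> w \<in> lattice_box (w - axis q 1) (w - axis q 1 + 1)"
  "k \<noteq> q \<Longrightarrow> w + axis k 1 \<in> lattice_box (w - axis q 1) (w - axis q 1 + 1)"
  by (auto simp: lattice_box_def axis_one_nth)

text \<open>For j \<noteq> q, c w j is the weight of the unit square at w spanned by e_q and e_j, traversed
  w \<rightarrow> w + e_j \<rightarrow> w + e_j + e_q \<rightarrow> w + e_q \<rightarrow> w; plaquette_flow q c w k is the value of the
  boundary of this 2-chain on the edge (w, w + e_k). The weights c w q are ignored.\<close>
definition plaquette_flow :: "'n \<Rightarrow> (int^'n \<Rightarrow> 'n \<Rightarrow> real) \<Rightarrow> int^'n \<Rightarrow> 'n \<Rightarrow> real" where
  "plaquette_flow q c w k =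
     (if k = q then (\<Sum>j\<in>UNIV. if j = q then 0 else c (w - axis j 1) j - c w j)
      else c w k - c (w - axis q 1) k)"

lemma plaquette_flow_divergence_free:
  "(\<Sum>k\<in>UNIV. plaquette_flow q c x k) = (\<Sum>k\<in>UNIV. plaquette_flow q c (x - axis k 1) k)"
proof -
  define S where "S w = (\<Sum>j\<in>UNIV. if j = q then 0 else c (w - axis j 1) j - c w j)" for w
  define T where "T w k = (if k = q then 0 else c w k - c (w - axis q 1) k)" for w k
  have split: "plaquette_flow q c w k = T w k + (if k = q then S w else 0)" for w k
    by (simp add: plaquette_flow_def S_def T_def)
  have "(\<Sum>k\<in>UNIV. plaquette_flow q c x k) - (\<Sum>k\<in>UNIV. plaquette_flow q c (x - axis k 1) k)
      = ((\<Sum>k\<in>UNIV. T x k) + S x) - ((\<Sum>k\<in>UNIV. T (x - axis k 1) k) + S (x - axis q 1))"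
    by (simp add: split sum.distrib)
  also have "\<dots> = (\<Sum>k\<in>UNIV. T x k - T (x - axis k 1) k
      + ((if k = q then 0 else c (x - axis k 1) k - c x k)
         - (if k = q then 0 else c (x - axis q 1 - axis k 1) k - c (x - axis q 1) k)))"
    by (simp add: sum.distrib sum_subtractf S_def)
  also have "\<dots> = 0"
    by (rule sum.neutral) (auto simp: T_def diff_diff_eq add.commute)
  finally show ?thesis by simp
qed

lemma plaquette_flow_cong:
  assumes "\<And>z. w \<in> lattice_box z (z + 1) \<Longrightarrow> w + axis k 1 \<in> lattice_box z (z + 1) \<Longrightarrow> c' z = c z"
  shows "plaquette_flow q c' w k = plaquette_flow q c w k"
proof (cases "k = q")
  case True
  have "c' (w - axis j 1) = c (w - axis j 1)" if "j \<noteq> q" for j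
    using that True by (intro assms unit_box_axis(3,4)[of k j w]) simp_all
  moreover have "c' w = c w" by (intro assms unit_box_axis(1,2))
  ultimately show ?thesis using True unfolding plaquette_flow_def by (auto intro: sum.cong)
next
  case False
  have "c' w = c w" "c' (w - axis q 1) = c (w - axis q 1)"
    using False by (intro assms unit_box_axis; simp)+
  thus ?thesis using False by (simp add: plaquette_flow_def)
qed

lemma plaquette_flow_eq_0:
  assumes "\<And>z. w \<in> lattice_box z (z + 1) \<Longrightarrow> w + axis k 1 \<in> lattice_box z (z + 1) \<Longrightarrow> c z = (\<lambda>_. 0)"
  shows "plaquette_flow q c w k = 0"
proof -
  have "plaquette_flow q c w k = plaquette_flow q (\<lambda>_ _. 0) w k"
    by (rule plaquette_flow_cong) (use assms in auto)
  also have "\<dots> = 0" by (simp add: plaquette_flow_def sum.neutral)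
  finally show ?thesis .
qed

lemma plaquette_flow_bound:
  fixes c :: "int^'n \<Rightarrow> 'n \<Rightarrow> real"
  assumes "\<And>z j. \<bar>c z j\<bar> \<le> 1"
  shows "\<bar>plaquette_flow q c w k\<bar> \<le> 2 * real CARD('n)"
proof (cases "k = q")
  case True
  have "\<bar>\<Sum>j\<in>UNIV. if j = q then 0 else c (w - axis j 1) j - c w j\<bar>
      \<le> (\<Sum>j\<in>UNIV. \<bar>if j = q then 0 else c (w - axis j 1) j - c w j\<bar>)"
    by (rule sum_abs)
  also have "\<dots> \<le> (\<Sum>j\<in>(UNIV::'n set). 2)"
    using assms by (intro sum_mono) (smt (verit))
  finally show ?thesis using True by (simp add: plaquette_flow_def)
next
  case False
  have "real CARD('n) \<ge> 1" by (simp add: Suc_le_eq)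
  moreover have "\<bar>c w k - c (w - axis q 1) k\<bar> \<le> \<bar>c w k\<bar> + \<bar>c (w - axis q 1) k\<bar>"
    by (rule abs_triangle_ineq4)
  ultimately have "\<bar>c w k - c (w - axis q 1) k\<bar> \<le> 2 * real CARD('n)"
    using assms[of w k] assms[of "w - axis q 1" k] by linarith
  thus ?thesis using False by (simp add: plaquette_flow_def)
qed

lemma edge_flow_plaquette_bound:
  fixes c :: "int^'n \<Rightarrow> 'n \<Rightarrow> real"
  assumes "\<And>z j. \<bar>c z j\<bar> \<le> 1" and "(x, y) \<in> cayley"
  shows "\<bar>edge_flow (plaquette_flow q c) (x, y)\<bar> \<le> 2 * real CARD('n)"
  using assms(2) by (cases rule: cayley_cases) (simp_all add: plaquette_flow_bound[OF assms(1)])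

text \<open>Iterating F from the constant d stabilises at the points of the box one level of the
  coordinate sum at a time.\<close>
lemma backward_recursion_fixpoint:
  fixes F :: "(int^'n \<Rightarrow> 'a) \<Rightarrow> int^'n \<Rightarrow> 'a"
  assumes local: "\<And>c c' z. (\<And>i. c (z - axis i 1) = c' (z - axis i 1)) \<Longrightarrow> F c z = F c' z"
    and outside: "\<And>c z. z \<notin> lattice_box lo hi \<Longrightarrow> F c z = d"
  shows "\<exists>c. F c = c"
proof -
  define level where "level z = (\<Sum>i\<in>UNIV. z $ i - lo $ i)" for z
  define iter where "iter n = (F ^^ n) (\<lambda>_. d)" for n
  have level_shift: "level (z - axis k 1) = level z - 1" for z k
  proof -
    have "level (z - axis k 1) = (\<Sum>i\<in>UNIV. (z $ i - lo $ i) - (if i = k then 1 else 0))"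
      unfolding level_def by (intro sum.cong) (auto simp: axis_one_nth)
    thus ?thesis by (simp add: sum_subtractf level_def)
  qed
  have level_range: "0 \<le> level z \<and> level z \<le> (\<Sum>i\<in>UNIV. hi $ i - lo $ i)"
    if "z \<in> lattice_box lo hi" for z
    using that unfolding level_def lattice_box_def
    by (auto intro!: sum_nonneg sum_mono)
  have stable: "iter (Suc n) z = iter n z" if "z \<in> lattice_box lo hi \<longrightarrow> level z < int n" for n z
    using that
  proof (induction n arbitrary: z)
    case 0
    hence "z \<notin> lattice_box lo hi" using level_range by force
    thus ?case by (simp add: iter_def outside)
  next
    case (Suc n)
    show ?case
    proof (cases "z \<in> lattice_box lo hi")
      case False
      thus ?thesis by (simp add: iter_def outside)
    next
      case True
      have "iter (Suc n) (z - axis i 1) = iter n (z - axis i 1)" for i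
        using Suc.prems True level_shift[of z i] by (intro Suc.IH) simp
      hence "F (iter (Suc n)) z = F (iter n) z" by (rule local)
      thus ?thesis by (simp add: iter_def)
    qed
  qed
  define N where "N = nat (\<Sum>i\<in>UNIV. hi $ i - lo $ i) + 1"
  have "F (iter N) z = iter N z" for z
  proof -
    have "z \<in> lattice_box lo hi \<longrightarrow> level z < int N"
      using level_range[of z] unfolding N_def by auto
    from stable[OF this] show ?thesis by (simp add: iter_def)
  qed
  thus ?thesis by blast
qed

definition plaquette_step ::
    "(int^'n) set \<Rightarrow> 'n \<Rightarrow> 'n \<Rightarrow> ((int^'n) \<times> (int^'n) \<Rightarrow> real)
       \<Rightarrow> (int^'n \<Rightarrow> 'n \<Rightarrow> real) \<Rightarrow> int^'n \<Rightarrow> 'n \<Rightarrow> real" where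
  "plaquette_step C q m \<phi> c z j =
     (if j = q then 0
      else if z \<in> C \<or> z + axis j 1 \<in> C then frac (c (z - axis q 1) j - \<phi> (z, z + axis j 1))
      else if z + axis q 1 \<in> C \<and> j = m
        then frac (\<phi> (z, z + axis q 1) + (\<Sum>i\<in>UNIV. if i = q then 0 else c (z - axis i 1) i))
      else 0)"

lemma plaquette_step_range: "0 \<le> plaquette_step C q m \<phi> c z j \<and> plaquette_step C q m \<phi> c z j < 1"
  by (simp add: plaquette_step_def frac_lt_1)

lemma plaquette_step_outside:
  assumes "C = lattice_box lo hi" "z \<notin> lattice_box (lo - 1) hi"
  shows "plaquette_step C q m \<phi> c z = (\<lambda>_. 0)"
proof -
  have "z \<notin> C \<and> (\<forall>j. z + axis j 1 \<notin> C)" using assms lattice_box_below by blast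
  thus ?thesis by (intro ext) (simp add: plaquette_step_def)
qed

lemma plaquette_step_fixpoint_exists:
  fixes C :: "(int^'n) set"
  assumes "C = lattice_box lo hi"
  shows "\<exists>c. plaquette_step C q m \<phi> c = c"
proof (rule backward_recursion_fixpoint)
  fix c c' :: "int^'n \<Rightarrow> 'n \<Rightarrow> real" and z
  assume agree: "\<And>i. c (z - axis i 1) = c' (z - axis i 1)"
  show "plaquette_step C q m \<phi> c z = plaquette_step C q m \<phi> c' z"
    unfolding plaquette_step_def agree ..
next
  fix c z assume "z \<notin> lattice_box (lo - 1) hi"
  thus "plaquette_step C q m \<phi> c z = (\<lambda>_. 0)" by (rule plaquette_step_outside[OF assms])
qed

lemma fixpoint_integral_transverse:
  assumes fixed: "plaquette_step C q m \<phi> c = c" and "j \<noteq> q" and "z \<in> C \<or> z + axis j 1 \<in> C"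
  shows "\<phi> (z, z + axis j 1) + plaquette_flow q c z j \<in> \<int>"
proof -
  have "c z j = plaquette_step C q m \<phi> c z j" using fixed by simp
  also have "\<dots> = frac (c (z - axis q 1) j - \<phi> (z, z + axis j 1))"
    using assms(2,3) by (simp add: plaquette_step_def)
  finally have "\<phi> (z, z + axis j 1) + plaquette_flow q c z j
      = - of_int \<lfloor>c (z - axis q 1) j - \<phi> (z, z + axis j 1)\<rfloor>"
    using assms(2) by (simp add: plaquette_flow_def frac_def)
  thus ?thesis by simp
qed

lemma fixpoint_integral_entering:
  assumes fixed: "plaquette_step C q m \<phi> c = c" and C: "C = lattice_box lo hi" and "q \<noteq> m"
    and "z \<notin> C" and "z + axis q 1 \<in> C"
  shows "\<phi> (z, z + axis q 1) + plaquette_flow q c z q \<in> \<int>"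
proof -
  define S where "S = (\<Sum>i\<in>UNIV. if i = q then 0 else c (z - axis i 1) i)"
  define t where "t = \<phi> (z, z + axis q 1) + S"
  have "c z j = (if j = m then frac t else 0)" if "j \<noteq> q" for j
  proof -
    have "z + axis j 1 \<notin> C" using lattice_box_corner assms(4,5) that C by blast
    hence "plaquette_step C q m \<phi> c z j = (if j = m then frac t else 0)"
      using assms(4,5) that by (simp add: plaquette_step_def S_def t_def)
    thus ?thesis using fixed by simp
  qed
  hence "(\<Sum>j\<in>UNIV. if j = q then 0 else c z j) = (\<Sum>j\<in>UNIV. if j = m then frac t else 0)"
    using \<open>q \<noteq> m\<close> by (intro sum.cong) auto
  moreover have "plaquette_flow q c z q = S - (\<Sum>j\<in>UNIV. if j = q then 0 else c z j)"
    unfolding plaquette_flow_def S_def by (simp add: sum_subtractf[symmetric] if_distrib cong: if_cong)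
  ultimately have "\<phi> (z, z + axis q 1) + plaquette_flow q c z q = of_int \<lfloor>t\<rfloor>"
    by (simp add: t_def frac_def)
  thus ?thesis by simp
qed

lemma flow_integral_remaining_edge:
  assumes "is_flow f \<psi>" and "\<And>k. \<psi> (x - axis k 1, x) \<in> \<int>"
    and "\<And>k. k \<noteq> q \<Longrightarrow> \<psi> (x, x + axis k 1) \<in> \<int>"
  shows "\<psi> (x, x + axis q 1) \<in> \<int>"
proof -
  have "\<psi> (x, x + axis q 1) = real_of_int (f x) - (\<Sum>k\<in>UNIV - {q}. \<psi> (x, x + axis k 1))
      + (\<Sum>k\<in>UNIV. \<psi> (x - axis k 1, x))"
    using is_flow_divergence[OF assms(1), of x] sum.remove[of UNIV q "\<lambda>k. \<psi> (x, x + axis k 1)"]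
    by simp
  also have "\<dots> \<in> \<int>" using assms(2,3) by (intro Ints_add Ints_diff Ints_sum Ints_of_int) auto
  finally show ?thesis .
qed

lemma fixpoint_integral_along:
  assumes fixed: "plaquette_step C q m \<phi> c = c" and C: "C = lattice_box lo hi" and "q \<noteq> m"
    and flow: "is_flow f \<phi>" and "x \<in> C"
  shows "\<phi> (x, x + axis q 1) + plaquette_flow q c x q \<in> \<int>"
  using \<open>x \<in> C\<close>
proof (induction "nat (x $ q - lo $ q)" arbitrary: x rule: less_induct)
  case less
  define \<psi> where "\<psi> e = \<phi> e + edge_flow (plaquette_flow q c) e" for e
  have "is_flow f \<psi>"
    unfolding \<psi>_def using flow plaquette_flow_divergence_free by (rule is_flow_add_edge_flow)
  hence "\<psi> (x, x + axis q 1) \<in> \<int>"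
  proof (rule flow_integral_remaining_edge)
    fix k
    have "\<phi> (w, w + axis k 1) + plaquette_flow q c w k \<in> \<int>" if "w + axis k 1 = x" for w
    proof (cases "k = q")
      case False
      thus ?thesis using fixpoint_integral_transverse[OF fixed] less.prems that by blast
    next
      case True
      show ?thesis
      proof (cases "w \<in> C")
        case in_C: True
        have "w $ q = x $ q - 1" "lo $ q \<le> w $ q"
          using that True in_C C by (auto simp: lattice_box_def)
        hence "nat (w $ q - lo $ q) < nat (x $ q - lo $ q)" by simp
        thus ?thesis using less.hyps in_C True by blast
      next
        case False
        thus ?thesis
          using fixpoint_integral_entering[OF fixed C \<open>q \<noteq> m\<close>] less.prems that True by blast
      qed
    qed
    from this[of "x - axis k 1"] show "\<psi> (x - axis k 1, x) \<in> \<int>"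
      using edge_flow_pos[of _ "x - axis k 1" k] by (simp add: \<psi>_def)
  next
    fix k assume "k \<noteq> q"
    thus "\<psi> (x, x + axis k 1) \<in> \<int>"
      using fixpoint_integral_transverse[OF fixed] less.prems by (simp add: \<psi>_def)
  qed
  thus ?case by (simp add: \<psi>_def)
qed

lemma integral_plaquette_weights:
  assumes C: "C = lattice_box lo hi" and "q \<noteq> m" and flow: "is_flow f \<phi>"
  obtains c where "\<And>z j. 0 \<le> c z j \<and> c z j < 1"
    and "\<And>z. z \<notin> lattice_box (lo - 1) hi \<Longrightarrow> c z = (\<lambda>_. 0)"
    and "\<And>z j. z \<in> C \<or> z + axis j 1 \<in> C \<Longrightarrow> \<phi> (z, z + axis j 1) + plaquette_flow q c z j \<in> \<int>"
proof -
  obtain c where fixed: "plaquette_step C q m \<phi> c = c"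
    using plaquette_step_fixpoint_exists[OF C] by blast
  show ?thesis
  proof (rule that)
    show "0 \<le> c z j \<and> c z j < 1" for z j
      using plaquette_step_range[of C q m \<phi> c z j] fixed by simp
    show "c z = (\<lambda>_. 0)" if "z \<notin> lattice_box (lo - 1) hi" for z
      using plaquette_step_outside[OF C that] fixed by metis
    show "\<phi> (z, z + axis j 1) + plaquette_flow q c z j \<in> \<int>" if "z \<in> C \<or> z + axis j 1 \<in> C" for z j
    proof (cases "j = q")
      case True
      thus ?thesis using that fixpoint_integral_along[OF fixed C \<open>q \<noteq> m\<close> flow]
          fixpoint_integral_entering[OF fixed C \<open>q \<noteq> m\<close>] by blast
    qed (use that fixpoint_integral_transverse[OF fixed] in blast)
  qed
qed

definition mask_weights :: "(int^'n) set set \<Rightarrow> (int^'n \<Rightarrow> 'n \<Rightarrow> real) \<Rightarrow> int^'n \<Rightarrow> 'n \<Rightarrow> real" where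
  "mask_weights CC c z = (if \<exists>A\<in>CC. lattice_box z (z + 1) \<inter> A \<noteq> {} then (\<lambda>_. 0) else c z)"

lemma plaquette_flow_mask_zero:
  assumes "A \<in> CC" and "w \<in> A \<or> w + axis l 1 \<in> A"
  shows "plaquette_flow q (mask_weights CC c) w l = 0"
  by (rule plaquette_flow_eq_0) (use assms in \<open>auto simp: mask_weights_def\<close>)

lemma edge_flow_mask_zero:
  assumes "A \<in> CC" and "(x, y) \<in> edges_plus A \<or> (y, x) \<in> edges_plus A"
  shows "edge_flow (plaquette_flow q (mask_weights CC c)) (x, y) = 0"
proof -
  obtain w l where edge: "(x, y) = (w, w + axis l 1) \<or> (y, x) = (w, w + axis l 1)"
      and ends: "w \<in> A \<or> w + axis l 1 \<in> A"
    using assms(2) unfolding edges_plus_def by blast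
  from ends have "plaquette_flow q (mask_weights CC c) w l = 0" by (intro plaquette_flow_mask_zero[OF assms(1)])
  with edge show ?thesis by (elim disjE) (simp_all add: prod_eq_iff)
qed

lemma plaquette_flow_mask_eq:
  assumes "\<And>A. A \<in> CC \<Longrightarrow> (w, w + axis l 1) \<notin> edges (nbhd A)"
  shows "plaquette_flow q (mask_weights CC c) w l = plaquette_flow q c w l"
proof (rule plaquette_flow_cong)
  fix z assume w: "w \<in> lattice_box z (z + 1)" "w + axis l 1 \<in> lattice_box z (z + 1)"
  have "lattice_box z (z + 1) \<inter> A = {}" if "A \<in> CC" for A
  proof (rule ccontr)
    assume "lattice_box z (z + 1) \<inter> A \<noteq> {}"
    then obtain v where "v \<in> lattice_box z (z + 1)" "v \<in> A" by blast
    hence "w \<in> nbhd A" "w + axis l 1 \<in> nbhd A" using unit_box_nbhd w by blast+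
    hence "(w, w + axis l 1) \<in> edges (nbhd A)" unfolding edges_def by blast
    thus False using assms that by blast
  qed
  thus "mask_weights CC c z = c z" by (auto simp: mask_weights_def)
qed

lemma plaquette_flow_support:
  assumes "\<forall>i. lo $ i \<le> hi $ i" and "\<And>z. z \<notin> lattice_box (lo - 1) hi \<Longrightarrow> c z = (\<lambda>_. 0)"
    and "plaquette_flow q c w l \<noteq> 0"
  shows "(w, w + axis l 1) \<in> edges (nbhd (lattice_box lo hi))"
proof -
  obtain z where z: "w \<in> lattice_box z (z + 1)" "w + axis l 1 \<in> lattice_box z (z + 1)"
      and "c z \<noteq> (\<lambda>_. 0)"
    using plaquette_flow_eq_0[of w l c q] assms(3) by blast
  hence "z \<in> lattice_box (lo - 1) hi" using assms(2) by blast
  hence "lattice_box z (z + 1) \<subseteq> lattice_box (lo - 1) (hi + 1)"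
    by (rule unit_box_subset)
  hence "w \<in> nbhd (lattice_box lo hi)" "w + axis l 1 \<in> nbhd (lattice_box lo hi)"
    using z lattice_box_subset_nbhd[OF assms(1)] by blast+
  thus ?thesis unfolding edges_def by blast
qed

lemma masked_correction_integral:
  assumes "\<And>z j. z \<in> C \<or> z + axis j 1 \<in> C \<Longrightarrow> \<phi> (z, z + axis j 1) + plaquette_flow q c z j \<in> \<int>"
    and e: "e \<in> edges_plus C - (\<Union>A\<in>CC. edges (nbhd A))"
  shows "\<phi> e + edge_flow (plaquette_flow q (mask_weights CC c)) e \<in> \<int>"
proof -
  obtain w l where w: "e = (w, w + axis l 1)" "w \<in> C \<or> w + axis l 1 \<in> C"
    using e unfolding edges_plus_def by blast
  hence "plaquette_flow q (mask_weights CC c) w l = plaquette_flow q c w l"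
    using e by (intro plaquette_flow_mask_eq) blast
  thus ?thesis using assms(1) w by simp
qed

lemma exists_distinct_of_card_ge_2:
  assumes "CARD('n::finite) \<ge> 2"
  shows "\<exists>q m :: 'n. q \<noteq> m"
proof (rule ccontr)
  assume "\<nexists>q m :: 'n. q \<noteq> m"
  hence "CARD('n) \<le> Suc 0" by (simp add: card_le_Suc0_iff_eq)
  thus False using assms by simp
qed

theorem mainTheorem6:
  fixes C :: "(int^'n) set" and CC :: "(int^'n) set set"
    and f :: "int^'n \<Rightarrow> int" and \<phi> :: "(int^'n) \<times> (int^'n) \<Rightarrow> real"
  assumes d2: "CARD('n) \<ge> 2"
    and cube: "is_cube C"
    and cubes: "\<forall>C'\<in>CC. is_cube C'"
    and inC: "\<forall>C'\<in>CC. nbhd C' \<subseteq> C"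
    and disj: "\<forall>C'\<in>CC. \<forall>C''\<in>CC. C' \<noteq> C'' \<longrightarrow> nbhd C' \<inter> nbhd C'' = {}"
    and flow: "is_flow f \<phi>"
    and bdd: "\<exists>B. \<forall>e\<in>cayley. \<bar>\<phi> e\<bar> \<le> B"
  shows "\<exists>\<psi>. is_flow f \<psi> \<and>
     supp_in (\<lambda>e. \<phi> e - \<psi> e) (edges (nbhd C)) \<and>
     (\<forall>C'\<in>CC. \<forall>x y. (x, y) \<in> cayley \<longrightarrow>
        ((x, y) \<in> edges_plus C' \<or> (y, x) \<in> edges_plus C') \<longrightarrow> \<phi> (x, y) - \<psi> (x, y) = 0) \<and>
     (\<forall>e\<in>edges_plus C - (\<Union>C'\<in>CC. edges (nbhd C')). \<psi> e \<in> \<int>) \<and>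
     (\<forall>e\<in>cayley. \<bar>\<phi> e - \<psi> e\<bar> < 6 * real CARD('n))"
proof -
  obtain q m :: 'n where "q \<noteq> m" using exists_distinct_of_card_ge_2[OF d2] by blast
  obtain lo hi where lohi: "\<forall>i. lo $ i \<le> hi $ i" and C: "C = lattice_box lo hi"
    using cube by (rule is_cube_lattice_box)
  obtain c where c_range: "\<And>z j. 0 \<le> c z j \<and> c z j < 1"
    and c_outside: "\<And>z. z \<notin> lattice_box (lo - 1) hi \<Longrightarrow> c z = (\<lambda>_. 0)"
    and c_integral: "\<And>z j. z \<in> C \<or> z + axis j 1 \<in> C \<Longrightarrow>
        \<phi> (z, z + axis j 1) + plaquette_flow q c z j \<in> \<int>"
    using integral_plaquette_weights[OF C \<open>q \<noteq> m\<close> flow] by blast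
  define P where "P = plaquette_flow q (mask_weights CC c)"
  have diff: "\<phi> e - (\<phi> e + edge_flow P e) = - edge_flow P e" for e by simp
  show ?thesis
  proof (intro exI[of _ "\<lambda>e. \<phi> e + edge_flow P e"] conjI, unfold diff)
    show "is_flow f (\<lambda>e. \<phi> e + edge_flow P e)"
      unfolding P_def using flow plaquette_flow_divergence_free by (rule is_flow_add_edge_flow)
    have "supp_in (edge_flow P) (edges (nbhd C))"
      unfolding P_def C using lohi c_outside
      by (intro supp_in_edge_flow plaquette_flow_support) (auto simp: mask_weights_def)
    thus "supp_in (\<lambda>e. - edge_flow P e) (edges (nbhd C))" by (simp add: supp_in_def)
    show "\<forall>C'\<in>CC. \<forall>x y. (x, y) \<in> cayley \<longrightarrow>
        ((x, y) \<in> edges_plus C' \<or> (y, x) \<in> edges_plus C') \<longrightarrow> - edge_flow P (x, y) = 0"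
      unfolding P_def using edge_flow_mask_zero by (simp only: neg_equal_0_iff_equal) blast
    show "\<forall>e\<in>edges_plus C - (\<Union>C'\<in>CC. edges (nbhd C')). \<phi> e + edge_flow P e \<in> \<int>"
      unfolding P_def by (intro ballI masked_correction_integral[OF c_integral])
    have "\<bar>mask_weights CC c z j\<bar> \<le> 1" for z j
      using c_range[of z j] by (simp add: mask_weights_def)
    hence "\<bar>edge_flow P e\<bar> \<le> 2 * real CARD('n)" if "e \<in> cayley" for e
      using that edge_flow_plaquette_bound unfolding P_def by (cases e) blast
    moreover have "0 < real CARD('n)" by simp
    ultimately show "\<forall>e\<in>cayley. \<bar>- edge_flow P e\<bar> < 6 * real CARD('n)"
      by (smt (verit) abs_minus_cancel)
  qed
qed

end
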